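(* Let $(L_i)_{i\in I}$ be a family of lattices with zero, pairwise intersecting in $\{0\}$, let $L=\coprod^0_{i\in I}L_i$ with each $L_i$ identified with its canonical copy in $L$, adjoin a new top element $\infty$ to $L$ and put $\overline{L}_i=L_i\cup\{\infty\}$. Let $\alpha_i\colon L\to L_i$, $x\mapsto x_{(i)}$ (the largest element of $L_i$ below $x$), and $\beta_i\colon L\to\overline{L}_i$, $x\mapsto x^{(i)}$ (the least element of $\overline{L}_i$ above $x$ in $L\cup\{\infty\}$); these exist for all $x$. Then, for each $i\in I$, the canonical embedding $L_i\hookrightarrow L$ is both lower bounded and upper bounded; in particular it is a nonempty-complete lattice homomorphism. Furthermore, $\alpha_i$ is meet-complete and $\beta_i$ is nonempty-join-complete.
   Context: $\coprod^0$ denotes the coproduct in the category of lattices with zero and zero-preserving homomorphisms. A map $f\colon K\to M$ between lattices (not necessarily complete) is meet-complete if for all $a\in K$ and $X\subseteq K$, $a=\bigwedge X$ in $K$ implies $f(a)=\bigwedge f[X]$ in $M$; nonempty-meet-complete if this is required only for nonempty $X$; join-completeness and nonempty-join-completeness are defined dually; $f$ is nonempty-complete if it is both nonempty-meet-complete and nonempty-join-complete. A homomorphism $f\colon K\to M$ is lower bounded if for each $y\in M$ the set $\{x\in K: y\le f(x)\}$ is empty or has a least element; upper bounded is defined dually. *)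

theory Defs
  imports Main
begin

definition is_inf :: "('a \<Rightarrow> 'a \<Rightarrow> bool) \<Rightarrow> 'a set \<Rightarrow> 'a set \<Rightarrow> 'a \<Rightarrow> bool" where
  "is_inf le A X a \<longleftrightarrow> a \<in> A \<and> (\<forall>x\<in>X. le a x) \<and> (\<forall>b\<in>A. (\<forall>x\<in>X. le b x) \<longrightarrow> le b a)"

definition is_sup :: "('a \<Rightarrow> 'a \<Rightarrow> bool) \<Rightarrow> 'a set \<Rightarrow> 'a set \<Rightarrow> 'a \<Rightarrow> bool" where
  "is_sup le A X a \<longleftrightarrow> a \<in> A \<and> (\<forall>x\<in>X. le x a) \<and> (\<forall>b\<in>A. (\<forall>x\<in>X. le x b) \<longrightarrow> le a b)"

definition partial_order_on_set :: "('a \<Rightarrow> 'a \<Rightarrow> bool) \<Rightarrow> 'a set \<Rightarrow> bool" where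
  "partial_order_on_set le A \<longleftrightarrow>
     (\<forall>x\<in>A. le x x) \<and>
     (\<forall>x\<in>A. \<forall>y\<in>A. le x y \<and> le y x \<longrightarrow> x = y) \<and>
     (\<forall>x\<in>A. \<forall>y\<in>A. \<forall>w\<in>A. le x y \<and> le y w \<longrightarrow> le x w)"

definition is_lattice :: "('a \<Rightarrow> 'a \<Rightarrow> bool) \<Rightarrow> 'a set \<Rightarrow> bool" where
  "is_lattice le A \<longleftrightarrow> partial_order_on_set le A \<and>
     (\<forall>x\<in>A. \<forall>y\<in>A. (\<exists>s. is_sup le A {x, y} s) \<and> (\<exists>m. is_inf le A {x, y} m))"

definition is_lattice0 :: "('a \<Rightarrow> 'a \<Rightarrow> bool) \<Rightarrow> 'a set \<Rightarrow> 'a \<Rightarrow> bool" where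
  "is_lattice0 le A z \<longleftrightarrow> is_lattice le A \<and> z \<in> A \<and> (\<forall>x\<in>A. le z x)"

definition lattice_hom ::
  "('a \<Rightarrow> 'a \<Rightarrow> bool) \<Rightarrow> 'a set \<Rightarrow> ('b \<Rightarrow> 'b \<Rightarrow> bool) \<Rightarrow> 'b set \<Rightarrow> ('a \<Rightarrow> 'b) \<Rightarrow> bool" where
  "lattice_hom leK K leM M f \<longleftrightarrow> f ` K \<subseteq> M \<and>
     (\<forall>x\<in>K. \<forall>y\<in>K. \<forall>s. is_sup leK K {x, y} s \<longrightarrow> is_sup leM M {f x, f y} (f s)) \<and>
     (\<forall>x\<in>K. \<forall>y\<in>K. \<forall>m. is_inf leK K {x, y} m \<longrightarrow> is_inf leM M {f x, f y} (f m))"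

definition lattice_hom0 ::
  "('a \<Rightarrow> 'a \<Rightarrow> bool) \<Rightarrow> 'a set \<Rightarrow> 'a \<Rightarrow> ('b \<Rightarrow> 'b \<Rightarrow> bool) \<Rightarrow> 'b set \<Rightarrow> 'b \<Rightarrow> ('a \<Rightarrow> 'b) \<Rightarrow> bool" where
  "lattice_hom0 leK K zK leM M zM f \<longleftrightarrow> lattice_hom leK K leM M f \<and> f zK = zM"

definition sublattice0 :: "('a \<Rightarrow> 'a \<Rightarrow> bool) \<Rightarrow> 'a set \<Rightarrow> 'a \<Rightarrow> 'a set \<Rightarrow> bool" where
  "sublattice0 le A z B \<longleftrightarrow> B \<subseteq> A \<and> z \<in> B \<and>
     (\<forall>x\<in>B. \<forall>y\<in>B. \<forall>s. is_sup le A {x, y} s \<longrightarrow> s \<in> B) \<and>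
     (\<forall>x\<in>B. \<forall>y\<in>B. \<forall>m. is_inf le A {x, y} m \<longrightarrow> m \<in> B)"

text \<open>\<open>(L, le, z)\<close> is the coproduct, in the category of lattices with zero and
  zero-preserving homomorphisms, of the 0-sublattices \<open>Ls i\<close> (\<open>i \<in> I\<close>), the coproduct
  injections being the inclusion maps.  The test objects range over lattices with zero
  carried by subsets of \<open>('a + bool) list\<close>; this type is large enough to carry the
  true coproduct (which is generated by \<open>\<Union>i\<in>I. Ls i \<subseteq> 'a\<close>, hence a quotient of the
  lattice terms over that set), so this universal property determines \<open>L\<close> up to
  isomorphism.\<close>
definition is_coproduct0 ::
  "('a \<Rightarrow> 'a \<Rightarrow> bool) \<Rightarrow> 'a set \<Rightarrow> 'a \<Rightarrow> 'i set \<Rightarrow> ('i \<Rightarrow> 'a set) \<Rightarrow> bool" where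
  "is_coproduct0 le L z I Ls \<longleftrightarrow>
     is_lattice0 le L z \<and> (\<forall>i\<in>I. sublattice0 le L z (Ls i)) \<and>
     (\<forall>(M :: ('a + bool) list set) leM zM (fs :: 'i \<Rightarrow> 'a \<Rightarrow> ('a + bool) list).
        is_lattice0 leM M zM \<and> (\<forall>i\<in>I. lattice_hom0 le (Ls i) z leM M zM (fs i)) \<longrightarrow>
        (\<exists>f. lattice_hom0 le L z leM M zM f \<and> (\<forall>i\<in>I. \<forall>x\<in>Ls i. f x = fs i x) \<and>
             (\<forall>g. lattice_hom0 le L z leM M zM g \<and> (\<forall>i\<in>I. \<forall>x\<in>Ls i. g x = fs i x)
                  \<longrightarrow> (\<forall>x\<in>L. g x = f x))))"

definition meet_complete ::
  "('a \<Rightarrow> 'a \<Rightarrow> bool) \<Rightarrow> 'a set \<Rightarrow> ('b \<Rightarrow> 'b \<Rightarrow> bool) \<Rightarrow> 'b set \<Rightarrow> ('a \<Rightarrow> 'b) \<Rightarrow> bool" where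
  "meet_complete leK K leM M f \<longleftrightarrow>
     (\<forall>a\<in>K. \<forall>X. X \<subseteq> K \<and> is_inf leK K X a \<longrightarrow> is_inf leM M (f ` X) (f a))"

definition nonempty_meet_complete ::
  "('a \<Rightarrow> 'a \<Rightarrow> bool) \<Rightarrow> 'a set \<Rightarrow> ('b \<Rightarrow> 'b \<Rightarrow> bool) \<Rightarrow> 'b set \<Rightarrow> ('a \<Rightarrow> 'b) \<Rightarrow> bool" where
  "nonempty_meet_complete leK K leM M f \<longleftrightarrow>
     (\<forall>a\<in>K. \<forall>X. X \<subseteq> K \<and> X \<noteq> {} \<and> is_inf leK K X a \<longrightarrow> is_inf leM M (f ` X) (f a))"

definition join_complete ::
  "('a \<Rightarrow> 'a \<Rightarrow> bool) \<Rightarrow> 'a set \<Rightarrow> ('b \<Rightarrow> 'b \<Rightarrow> bool) \<Rightarrow> 'b set \<Rightarrow> ('a \<Rightarrow> 'b) \<Rightarrow> bool" where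
  "join_complete leK K leM M f \<longleftrightarrow>
     (\<forall>a\<in>K. \<forall>X. X \<subseteq> K \<and> is_sup leK K X a \<longrightarrow> is_sup leM M (f ` X) (f a))"

definition nonempty_join_complete ::
  "('a \<Rightarrow> 'a \<Rightarrow> bool) \<Rightarrow> 'a set \<Rightarrow> ('b \<Rightarrow> 'b \<Rightarrow> bool) \<Rightarrow> 'b set \<Rightarrow> ('a \<Rightarrow> 'b) \<Rightarrow> bool" where
  "nonempty_join_complete leK K leM M f \<longleftrightarrow>
     (\<forall>a\<in>K. \<forall>X. X \<subseteq> K \<and> X \<noteq> {} \<and> is_sup leK K X a \<longrightarrow> is_sup leM M (f ` X) (f a))"

definition nonempty_complete ::
  "('a \<Rightarrow> 'a \<Rightarrow> bool) \<Rightarrow> 'a set \<Rightarrow> ('b \<Rightarrow> 'b \<Rightarrow> bool) \<Rightarrow> 'b set \<Rightarrow> ('a \<Rightarrow> 'b) \<Rightarrow> bool" where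
  "nonempty_complete leK K leM M f \<longleftrightarrow>
     nonempty_meet_complete leK K leM M f \<and> nonempty_join_complete leK K leM M f"

definition lower_bounded ::
  "('a \<Rightarrow> 'a \<Rightarrow> bool) \<Rightarrow> 'a set \<Rightarrow> ('b \<Rightarrow> 'b \<Rightarrow> bool) \<Rightarrow> 'b set \<Rightarrow> ('a \<Rightarrow> 'b) \<Rightarrow> bool" where
  "lower_bounded leK K leM M f \<longleftrightarrow>
     (\<forall>y\<in>M. {x\<in>K. leM y (f x)} = {} \<or>
            (\<exists>m\<in>{x\<in>K. leM y (f x)}. \<forall>x\<in>{x\<in>K. leM y (f x)}. leK m x))"

definition upper_bounded ::
  "('a \<Rightarrow> 'a \<Rightarrow> bool) \<Rightarrow> 'a set \<Rightarrow> ('b \<Rightarrow> 'b \<Rightarrow> bool) \<Rightarrow> 'b set \<Rightarrow> ('a \<Rightarrow> 'b) \<Rightarrow> bool" where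
  "upper_bounded leK K leM M f \<longleftrightarrow>
     (\<forall>y\<in>M. {x\<in>K. leM (f x) y} = {} \<or>
            (\<exists>m\<in>{x\<in>K. leM (f x) y}. \<forall>x\<in>{x\<in>K. leM (f x) y}. leK x m))"

text \<open>Adjoining a new top element \<open>\<infinity>\<close>: elements of \<open>L \<union> {\<infinity>}\<close> are \<open>Some x\<close> and \<open>None = \<infinity>\<close>.\<close>
definition le_top :: "('a \<Rightarrow> 'a \<Rightarrow> bool) \<Rightarrow> 'a option \<Rightarrow> 'a option \<Rightarrow> bool" where
  "le_top le a b \<longleftrightarrow> (case b of None \<Rightarrow> True
                              | Some y \<Rightarrow> (case a of None \<Rightarrow> False | Some x \<Rightarrow> le x y))"

definition with_top :: "'a set \<Rightarrow> 'a option set" where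
  "with_top A = Some ` A \<union> {None}"

definition is_greatest_below :: "('a \<Rightarrow> 'a \<Rightarrow> bool) \<Rightarrow> 'a set \<Rightarrow> 'a \<Rightarrow> 'a \<Rightarrow> bool" where
  "is_greatest_below le A x y \<longleftrightarrow> y \<in> A \<and> le y x \<and> (\<forall>w\<in>A. le w x \<longrightarrow> le w y)"

definition lower_proj :: "('a \<Rightarrow> 'a \<Rightarrow> bool) \<Rightarrow> 'a set \<Rightarrow> 'a \<Rightarrow> 'a" where
  "lower_proj le A x = (THE y. is_greatest_below le A x y)"

definition is_least_above :: "('a \<Rightarrow> 'a \<Rightarrow> bool) \<Rightarrow> 'a set \<Rightarrow> 'a \<Rightarrow> 'a option \<Rightarrow> bool" where
  "is_least_above le A x y \<longleftrightarrow> y \<in> with_top A \<and> le_top le (Some x) y \<and>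
     (\<forall>w\<in>with_top A. le_top le (Some x) w \<longrightarrow> le_top le y w)"

definition upper_proj :: "('a \<Rightarrow> 'a \<Rightarrow> bool) \<Rightarrow> 'a set \<Rightarrow> 'a \<Rightarrow> 'a option" where
  "upper_proj le A x = (THE y. is_least_above le A x y)"

end

(*
  Both projections come from zero-preserving homomorphisms out of the coproduct.  Mapping L_i
  identically and every other L_j to zero induces a retraction r of L onto L_i.  The elements x
  with r x <= x contain every L_j and are closed under binary joins and meets; since L is generated
  by the L_j, this holds for all x, and then r x is the largest element of L_i below x.

  For the upper projection, send L_i identically into L_i + {\<infinity>} and every nonzero element of
  another L_j to \<infinity>.  This is not a meet-homomorphism on its own (two nonzero elements may meet
  in zero), but it becomes one after pairing it with the inclusion into L + {\<infinity>} and passing to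
  the smash product, in which pairs with exactly one zero coordinate are identified with zero.
  The same generation argument shows that the first coordinate h x of the induced homomorphism
  lies above x, and monotonicity makes it the least element of L_i + {\<infinity>} above x.

  Boundedness of the embedding and the completeness properties follow formally from the
  existence of the two projections.
*)

theory Submission
  imports Defs
begin

lemma po_refl: "partial_order_on_set le A \<Longrightarrow> x \<in> A \<Longrightarrow> le x x"
  unfolding partial_order_on_set_def by blast

lemma po_antisym:
  "partial_order_on_set le A \<Longrightarrow> x \<in> A \<Longrightarrow> y \<in> A \<Longrightarrow> le x y \<Longrightarrow> le y x \<Longrightarrow> x = y"
  unfolding partial_order_on_set_def by blast

lemma po_trans:
  "partial_order_on_set le A \<Longrightarrow> x \<in> A \<Longrightarrow> y \<in> A \<Longrightarrow> w \<in> A \<Longrightarrow> le x y \<Longrightarrow> le y w \<Longrightarrow> le x w"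
  unfolding partial_order_on_set_def by blast

lemma po_subset: "partial_order_on_set le L \<Longrightarrow> T \<subseteq> L \<Longrightarrow> partial_order_on_set le T"
  unfolding partial_order_on_set_def by (meson subsetD)

lemma is_sup_unique: "partial_order_on_set le A \<Longrightarrow> is_sup le A X s \<Longrightarrow> is_sup le A X t \<Longrightarrow> s = t"
  unfolding is_sup_def by (meson po_antisym)

lemma is_inf_unique: "partial_order_on_set le A \<Longrightarrow> is_inf le A X s \<Longrightarrow> is_inf le A X t \<Longrightarrow> s = t"
  unfolding is_inf_def by (meson po_antisym)

lemma is_sup_subset: "is_sup le L X s \<Longrightarrow> s \<in> T \<Longrightarrow> T \<subseteq> L \<Longrightarrow> is_sup le T X s"
  unfolding is_sup_def by blast

lemma is_inf_subset: "is_inf le L X s \<Longrightarrow> s \<in> T \<Longrightarrow> T \<subseteq> L \<Longrightarrow> is_inf le T X s"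
  unfolding is_inf_def by blast

lemma is_sup_pair_of_le:
  "partial_order_on_set le L \<Longrightarrow> x \<in> L \<Longrightarrow> y \<in> L \<Longrightarrow> le x y \<Longrightarrow> is_sup le L {x, y} y"
  unfolding is_sup_def by (blast dest: po_refl)

lemma lattice0_po: "is_lattice0 le A z \<Longrightarrow> partial_order_on_set le A"
  by (simp add: is_lattice0_def is_lattice_def)

lemma lattice0_zero: "is_lattice0 le A z \<Longrightarrow> z \<in> A" "is_lattice0 le A z \<Longrightarrow> x \<in> A \<Longrightarrow> le z x"
  by (auto simp: is_lattice0_def)

lemma lattice0_le_zero: "is_lattice0 le A z \<Longrightarrow> x \<in> A \<Longrightarrow> le x z \<Longrightarrow> x = z"
  by (meson lattice0_po lattice0_zero po_antisym)

lemma lattice0_sup_ex: "is_lattice0 le A z \<Longrightarrow> x \<in> A \<Longrightarrow> y \<in> A \<Longrightarrow> \<exists>s. is_sup le A {x, y} s"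
  by (simp add: is_lattice0_def is_lattice_def)

lemma lattice0_inf_ex: "is_lattice0 le A z \<Longrightarrow> x \<in> A \<Longrightarrow> y \<in> A \<Longrightarrow> \<exists>m. is_inf le A {x, y} m"
  by (simp add: is_lattice0_def is_lattice_def)

lemma lattice0I:
  assumes "partial_order_on_set le A" "z \<in> A" "\<And>x. x \<in> A \<Longrightarrow> le z x"
    "\<And>x y. x \<in> A \<Longrightarrow> y \<in> A \<Longrightarrow> \<exists>s. is_sup le A {x, y} s"
    "\<And>x y. x \<in> A \<Longrightarrow> y \<in> A \<Longrightarrow> \<exists>m. is_inf le A {x, y} m"
  shows "is_lattice0 le A z"
  unfolding is_lattice0_def is_lattice_def using assms by blast

lemma lattice0_sup_eq_zero:
  assumes A: "is_lattice0 le A z" and s: "is_sup le A {a, b} s" and a: "a \<in> A" and b: "b \<in> A"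
  shows "s = z \<longleftrightarrow> a = z \<and> b = z"
proof
  assume "s = z"
  then show "a = z \<and> b = z" using s lattice0_le_zero[OF A] a b unfolding is_sup_def by auto
next
  assume "a = z \<and> b = z"
  then have "le s z"
    using s lattice0_zero(1)[OF A] po_refl[OF lattice0_po[OF A] lattice0_zero(1)[OF A]]
    unfolding is_sup_def by auto
  then show "s = z" using lattice0_le_zero[OF A] s unfolding is_sup_def by blast
qed

lemma lattice_hom0_mem: "lattice_hom0 leK K zK leM M zM f \<Longrightarrow> x \<in> K \<Longrightarrow> f x \<in> M"
  unfolding lattice_hom0_def lattice_hom_def by blast

lemma lattice_hom0_zero: "lattice_hom0 leK K zK leM M zM f \<Longrightarrow> f zK = zM"
  unfolding lattice_hom0_def by blast

lemma lattice_hom0_sup: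
  "lattice_hom0 leK K zK leM M zM f \<Longrightarrow> x \<in> K \<Longrightarrow> y \<in> K \<Longrightarrow> is_sup leK K {x, y} s
    \<Longrightarrow> is_sup leM M {f x, f y} (f s)"
  unfolding lattice_hom0_def lattice_hom_def by blast

lemma lattice_hom0_inf:
  "lattice_hom0 leK K zK leM M zM f \<Longrightarrow> x \<in> K \<Longrightarrow> y \<in> K \<Longrightarrow> is_inf leK K {x, y} m
    \<Longrightarrow> is_inf leM M {f x, f y} (f m)"
  unfolding lattice_hom0_def lattice_hom_def by blast

lemma lattice_hom0_mono:
  assumes f: "lattice_hom0 leK K zK leM M zM f" and K: "partial_order_on_set leK K"
    and x: "x \<in> K" and y: "y \<in> K" and xy: "leK x y"
  shows "leM (f x) (f y)"
  using lattice_hom0_sup[OF f x y is_sup_pair_of_le[OF K x y xy]] unfolding is_sup_def by blast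

lemma lattice_hom0_cong:
  assumes f: "lattice_hom0 leK K zK leM M zM f" and fg: "\<forall>x\<in>K. f x = g x" and zK: "zK \<in> K"
  shows "lattice_hom0 leK K zK leM M zM g"
  unfolding lattice_hom0_def lattice_hom_def
proof (intro conjI ballI allI impI)
  show "g ` K \<subseteq> M" "g zK = zM"
    using f fg zK unfolding lattice_hom0_def lattice_hom_def by auto
  fix x y s assume xy: "x \<in> K" "y \<in> K"
  { assume s: "is_sup leK K {x, y} s"
    then have "s \<in> K" unfolding is_sup_def by blast
    with lattice_hom0_sup[OF f xy s] show "is_sup leM M {g x, g y} (g s)" using xy fg by simp }
  { assume s: "is_inf leK K {x, y} s"
    then have "s \<in> K" unfolding is_inf_def by blast
    with lattice_hom0_inf[OF f xy s] show "is_inf leM M {g x, g y} (g s)" using xy fg by simp }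
qed

lemma const_lattice_hom0:
  assumes A: "is_lattice0 leA A zA"
  shows "lattice_hom0 leB B zB leA A zA (\<lambda>_. zA)"
proof -
  have zA: "zA \<in> A" using lattice0_zero(1)[OF A] .
  have "leA zA zA" using po_refl[OF lattice0_po[OF A] zA] .
  then have "is_sup leA A {zA, zA} zA" "is_inf leA A {zA, zA} zA"
    unfolding is_sup_def is_inf_def using zA by auto
  then show ?thesis unfolding lattice_hom0_def lattice_hom_def using zA by auto
qed

lemma sublattice0D:
  assumes "sublattice0 le L z B"
  shows "B \<subseteq> L" "z \<in> B"
    "x \<in> B \<Longrightarrow> y \<in> B \<Longrightarrow> is_sup le L {x, y} s \<Longrightarrow> s \<in> B"
    "x \<in> B \<Longrightarrow> y \<in> B \<Longrightarrow> is_inf le L {x, y} s \<Longrightarrow> s \<in> B"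
  using assms unfolding sublattice0_def by blast+

lemma sublattice0_refl: "is_lattice0 le L z \<Longrightarrow> sublattice0 le L z L"
  unfolding sublattice0_def is_sup_def is_inf_def by (simp add: lattice0_zero(1))

lemma sublattice0_sup_iff:
  assumes L: "is_lattice0 le L z" and T: "sublattice0 le L z T" and x: "x \<in> T" and y: "y \<in> T"
  shows "is_sup le T {x, y} s \<longleftrightarrow> is_sup le L {x, y} s"
proof
  obtain t where t: "is_sup le L {x, y} t"
    using lattice0_sup_ex[OF L] x y sublattice0D(1)[OF T] by blast
  have "is_sup le T {x, y} t"
    using is_sup_subset[OF t sublattice0D(3)[OF T x y t] sublattice0D(1)[OF T]] .
  moreover assume "is_sup le T {x, y} s"
  moreover have "partial_order_on_set le T"
    using po_subset[OF lattice0_po[OF L] sublattice0D(1)[OF T]] .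
  ultimately show "is_sup le L {x, y} s" using t is_sup_unique by metis
next
  assume s: "is_sup le L {x, y} s"
  show "is_sup le T {x, y} s"
    using is_sup_subset[OF s sublattice0D(3)[OF T x y s] sublattice0D(1)[OF T]] .
qed

lemma sublattice0_inf_iff:
  assumes L: "is_lattice0 le L z" and T: "sublattice0 le L z T" and x: "x \<in> T" and y: "y \<in> T"
  shows "is_inf le T {x, y} s \<longleftrightarrow> is_inf le L {x, y} s"
proof
  obtain t where t: "is_inf le L {x, y} t"
    using lattice0_inf_ex[OF L] x y sublattice0D(1)[OF T] by blast
  have "is_inf le T {x, y} t"
    using is_inf_subset[OF t sublattice0D(4)[OF T x y t] sublattice0D(1)[OF T]] .
  moreover assume "is_inf le T {x, y} s"
  moreover have "partial_order_on_set le T"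
    using po_subset[OF lattice0_po[OF L] sublattice0D(1)[OF T]] .
  ultimately show "is_inf le L {x, y} s" using t is_inf_unique by metis
next
  assume s: "is_inf le L {x, y} s"
  show "is_inf le T {x, y} s"
    using is_inf_subset[OF s sublattice0D(4)[OF T x y s] sublattice0D(1)[OF T]] .
qed

lemma sublattice0_lattice0:
  assumes L: "is_lattice0 le L z" and T: "sublattice0 le L z T"
  shows "is_lattice0 le T z"
proof (rule lattice0I)
  note TL = sublattice0D(1)[OF T]
  show "partial_order_on_set le T" using po_subset[OF lattice0_po[OF L] TL] .
  show "z \<in> T" using sublattice0D(2)[OF T] .
  show "le z x" if "x \<in> T" for x using lattice0_zero(2)[OF L subsetD[OF TL that]] .
  show "\<exists>s. is_sup le T {x, y} s" if xy: "x \<in> T" "y \<in> T" for x y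
  proof -
    obtain s where "is_sup le L {x, y} s" using lattice0_sup_ex[OF L] xy TL by blast
    then show ?thesis unfolding sublattice0_sup_iff[OF L T xy] ..
  qed
  show "\<exists>m. is_inf le T {x, y} m" if xy: "x \<in> T" "y \<in> T" for x y
  proof -
    obtain m where "is_inf le L {x, y} m" using lattice0_inf_ex[OF L] xy TL by blast
    then show ?thesis unfolding sublattice0_inf_iff[OF L T xy] ..
  qed
qed

lemma lattice_hom0_into_sublattice0_iff:
  assumes L: "is_lattice0 le L z" and T: "sublattice0 le L z T" and fK: "f ` K \<subseteq> T"
  shows "lattice_hom0 leK K zK le T z f \<longleftrightarrow> lattice_hom0 leK K zK le L z f"
proof -
  have fKL: "f ` K \<subseteq> L" using fK sublattice0D(1)[OF T] by blast
  have sup_eq: "is_sup le T {f x, f y} (f s) \<longleftrightarrow> is_sup le L {f x, f y} (f s)"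
    and inf_eq: "is_inf le T {f x, f y} (f s) \<longleftrightarrow> is_inf le L {f x, f y} (f s)"
    if "x \<in> K" "y \<in> K" for x y s
  proof -
    have fxy: "f x \<in> T" "f y \<in> T" using fK that by auto
    show "is_sup le T {f x, f y} (f s) \<longleftrightarrow> is_sup le L {f x, f y} (f s)"
      and "is_inf le T {f x, f y} (f s) \<longleftrightarrow> is_inf le L {f x, f y} (f s)"
      using sublattice0_sup_iff[OF L T fxy] sublattice0_inf_iff[OF L T fxy] .
  qed
  show ?thesis
    unfolding lattice_hom0_def lattice_hom_def using fK fKL by (simp add: sup_eq inf_eq cong: ball_cong)
qed

lemma lattice_hom0_inclusion:
  assumes L: "is_lattice0 le L z" and B: "sublattice0 le L z B"
  shows "lattice_hom0 le B z le L z id"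
proof -
  have "lattice_hom0 le B z le B z id"
    using sublattice0D(2)[OF B] unfolding lattice_hom0_def lattice_hom_def by simp
  then show ?thesis using lattice_hom0_into_sublattice0_iff[OF L B, of id] by simp
qed

section \<open>Transport along an injection\<close>

text \<open>The universal property in \<open>is_coproduct0\<close> only quantifies over test lattices carried
  by subsets of \<open>('a + bool) list\<close>; a test lattice on another type is transported there along an
  injection.\<close>

definition image_order :: "('b \<Rightarrow> 'c) \<Rightarrow> 'b set \<Rightarrow> ('b \<Rightarrow> 'b \<Rightarrow> bool) \<Rightarrow> 'c \<Rightarrow> 'c \<Rightarrow> bool" where
  "image_order e A le u v \<longleftrightarrow> le (the_inv_into A e u) (the_inv_into A e v)"

lemma image_order_image:
  "inj_on e A \<Longrightarrow> x \<in> A \<Longrightarrow> y \<in> A \<Longrightarrow> image_order e A le (e x) (e y) \<longleftrightarrow> le x y"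
  by (simp add: image_order_def the_inv_into_f_f)

lemma is_sup_image_order:
  assumes e: "inj_on e A" and X: "X \<subseteq> A" and s: "s \<in> A"
  shows "is_sup (image_order e A le) (e ` A) (e ` X) (e s) \<longleftrightarrow> is_sup le A X s"
  using s subsetD[OF X] unfolding is_sup_def by (auto simp: image_order_image[OF e])

lemma is_inf_image_order:
  assumes e: "inj_on e A" and X: "X \<subseteq> A" and s: "s \<in> A"
  shows "is_inf (image_order e A le) (e ` A) (e ` X) (e s) \<longleftrightarrow> is_inf le A X s"
  using s subsetD[OF X] unfolding is_inf_def by (auto simp: image_order_image[OF e])

lemma lattice0_image_order:
  assumes e: "inj_on e A" and A: "is_lattice0 le A z"
  shows "is_lattice0 (image_order e A le) (e ` A) (e z)"
proof (rule lattice0I)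
  have po: "partial_order_on_set le A" using lattice0_po[OF A] .
  show "partial_order_on_set (image_order e A le) (e ` A)"
    unfolding partial_order_on_set_def
  proof (intro conjI ballI impI)
    fix u assume "u \<in> e ` A"
    then obtain a where "a \<in> A" "u = e a" by blast
    then show "image_order e A le u u" using po_refl[OF po, of a] image_order_image[OF e] by simp
  next
    fix u v assume uv: "u \<in> e ` A" "v \<in> e ` A" "image_order e A le u v \<and> image_order e A le v u"
    then obtain a b where "a \<in> A" "b \<in> A" "u = e a" "v = e b" by blast
    then show "u = v" using po_antisym[OF po, of a b] uv(3) image_order_image[OF e] by simp
  next
    fix u v w assume uvw: "u \<in> e ` A" "v \<in> e ` A" "w \<in> e ` A"
      "image_order e A le u v \<and> image_order e A le v w"
    then obtain a b c where "a \<in> A" "b \<in> A" "c \<in> A" "u = e a" "v = e b" "w = e c" by blast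
    then show "image_order e A le u w"
      using po_trans[OF po, of a b c] uvw(4) image_order_image[OF e] by simp
  qed
  show "e z \<in> e ` A" using lattice0_zero(1)[OF A] by blast
  show "image_order e A le (e z) u" if "u \<in> e ` A" for u
    using that lattice0_zero[OF A] image_order_image[OF e] by blast
  show "\<exists>s. is_sup (image_order e A le) (e ` A) {u, v} s" if uv: "u \<in> e ` A" "v \<in> e ` A" for u v
  proof -
    obtain a b where ab: "a \<in> A" "b \<in> A" "u = e a" "v = e b" using uv by blast
    obtain s where s: "is_sup le A {a, b} s" using lattice0_sup_ex[OF A ab(1,2)] by blast
    then have "s \<in> A" unfolding is_sup_def by blast
    with s have "is_sup (image_order e A le) (e ` A) (e ` {a, b}) (e s)"
      using is_sup_image_order[OF e, of "{a, b}" s] ab by simp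
    then show ?thesis using ab by auto
  qed
  show "\<exists>m. is_inf (image_order e A le) (e ` A) {u, v} m" if uv: "u \<in> e ` A" "v \<in> e ` A" for u v
  proof -
    obtain a b where ab: "a \<in> A" "b \<in> A" "u = e a" "v = e b" using uv by blast
    obtain m where m: "is_inf le A {a, b} m" using lattice0_inf_ex[OF A ab(1,2)] by blast
    then have "m \<in> A" unfolding is_inf_def by blast
    with m have "is_inf (image_order e A le) (e ` A) (e ` {a, b}) (e m)"
      using is_inf_image_order[OF e, of "{a, b}" m] ab by simp
    then show ?thesis using ab by auto
  qed
qed

lemma lattice_hom0_image_order_iff:
  assumes e: "inj_on e A" and g: "g ` K \<subseteq> A" and zK: "zK \<in> K" and zA: "zA \<in> A"
  shows "lattice_hom0 leK K zK (image_order e A leA) (e ` A) (e zA) (e \<circ> g)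
     \<longleftrightarrow> lattice_hom0 leK K zK leA A zA g"
proof -
  have sup_eq: "is_sup (image_order e A leA) (e ` A) {e (g x), e (g y)} (e (g s))
      \<longleftrightarrow> is_sup leA A {g x, g y} (g s)"
    if "x \<in> K" "y \<in> K" "is_sup leK K {x, y} s" for x y s
  proof -
    have "s \<in> K" using that(3) unfolding is_sup_def by blast
    then show ?thesis using is_sup_image_order[OF e, of "{g x, g y}" "g s"] g that(1,2) by auto
  qed
  have inf_eq: "is_inf (image_order e A leA) (e ` A) {e (g x), e (g y)} (e (g s))
      \<longleftrightarrow> is_inf leA A {g x, g y} (g s)"
    if "x \<in> K" "y \<in> K" "is_inf leK K {x, y} s" for x y s
  proof -
    have "s \<in> K" using that(3) unfolding is_inf_def by blast
    then show ?thesis using is_inf_image_order[OF e, of "{g x, g y}" "g s"] g that(1,2) by auto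
  qed
  have zero_eq: "e (g zK) = e zA \<longleftrightarrow> g zK = zA"
    using inj_on_eq_iff[OF e] g zK zA by blast
  have "(e \<circ> g) ` K \<subseteq> e ` A" using g by auto
  then show ?thesis
    unfolding lattice_hom0_def lattice_hom_def comp_apply zero_eq
    using g by (simp add: sup_eq inf_eq cong: imp_cong)
qed

section \<open>Coproducts\<close>

lemma is_coproduct0D:
  assumes "is_coproduct0 le L z I Ls"
  shows "is_lattice0 le L z" "j \<in> I \<Longrightarrow> sublattice0 le L z (Ls j)"
  using assms unfolding is_coproduct0_def by blast+

lemma coproduct0_universal:
  fixes e :: "'b \<Rightarrow> ('a + bool) list" and fs :: "'i \<Rightarrow> 'a \<Rightarrow> 'b"
  assumes cp: "is_coproduct0 le L z I Ls" and A: "is_lattice0 leA A zA" and e: "inj_on e A"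
    and fs: "\<forall>j\<in>I. lattice_hom0 le (Ls j) z leA A zA (fs j)"
  shows "\<exists>f. lattice_hom0 le L z leA A zA f \<and> (\<forall>j\<in>I. \<forall>x\<in>Ls j. f x = fs j x) \<and>
    (\<forall>g. lattice_hom0 le L z leA A zA g \<and> (\<forall>j\<in>I. \<forall>x\<in>Ls j. g x = fs j x) \<longrightarrow> (\<forall>x\<in>L. g x = f x))"
proof -
  let ?leM = "image_order e A leA"
  note L = is_coproduct0D(1)[OF cp] and Ls = is_coproduct0D(2)[OF cp]
  have zL: "z \<in> L" and zA: "zA \<in> A" using lattice0_zero(1)[OF L] lattice0_zero(1)[OF A] .
  have hom_iff: "lattice_hom0 le K z ?leM (e ` A) (e zA) (e \<circ> g) \<longleftrightarrow> lattice_hom0 le K z leA A zA g"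
    if "g ` K \<subseteq> A" "z \<in> K" for K g
    using lattice_hom0_image_order_iff[OF e that zA] .
  have fsA: "fs j ` Ls j \<subseteq> A" if "j \<in> I" for j
    using fs that unfolding lattice_hom0_def lattice_hom_def by blast
  have "\<forall>j\<in>I. lattice_hom0 le (Ls j) z ?leM (e ` A) (e zA) (e \<circ> fs j)"
    using hom_iff[OF fsA sublattice0D(2)[OF Ls]] fs by blast
  with lattice0_image_order[OF e A] obtain F where F: "lattice_hom0 le L z ?leM (e ` A) (e zA) F"
      "\<forall>j\<in>I. \<forall>x\<in>Ls j. F x = (e \<circ> fs j) x"
    and F_unique: "\<And>g. lattice_hom0 le L z ?leM (e ` A) (e zA) g \<Longrightarrow>
      \<forall>j\<in>I. \<forall>x\<in>Ls j. g x = (e \<circ> fs j) x \<Longrightarrow> \<forall>x\<in>L. g x = F x"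
    using cp[unfolded is_coproduct0_def, THEN conjunct2, THEN conjunct2, rule_format,
        where M = "e ` A" and leM = ?leM and zM = "e zA" and fs = "\<lambda>j. e \<circ> fs j"]
    by blast
  define f where "f = the_inv_into A e \<circ> F"
  have F_eq: "F x = e (f x)" and fA: "f x \<in> A" if x: "x \<in> L" for x
  proof -
    obtain a where "a \<in> A" "F x = e a" using lattice_hom0_mem[OF F(1) x] by blast
    then show "F x = e (f x)" "f x \<in> A" unfolding f_def by (simp_all add: the_inv_into_f_f[OF e])
  qed
  have "lattice_hom0 le L z ?leM (e ` A) (e zA) (e \<circ> f)"
    using lattice_hom0_cong[OF F(1)] F_eq zL by simp
  then have f_hom: "lattice_hom0 le L z leA A zA f" using hom_iff[OF _ zL] fA by blast
  moreover have "\<forall>j\<in>I. \<forall>x\<in>Ls j. f x = fs j x"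
    using F(2) fsA the_inv_into_f_f[OF e] unfolding f_def by fastforce
  moreover have "\<forall>x\<in>L. g x = f x"
    if g: "lattice_hom0 le L z leA A zA g" "\<forall>j\<in>I. \<forall>x\<in>Ls j. g x = fs j x" for g
  proof
    fix x assume x: "x \<in> L"
    have gA: "g ` L \<subseteq> A" using g(1) unfolding lattice_hom0_def lattice_hom_def by blast
    have "e (g x) = e (f x)"
      using F_unique[of "e \<circ> g"] hom_iff[OF gA zL] g F_eq x by simp
    then show "g x = f x" using inj_onD[OF e] gA fA[OF x] x by blast
  qed
  ultimately show ?thesis by blast
qed

lemma coproduct0_induct [consumes 2, case_names zero generator sup inf]:
  assumes cp: "is_coproduct0 le L z I Ls" and x: "x \<in> L"
    and zero: "P z"
    and generator: "\<And>j a. j \<in> I \<Longrightarrow> a \<in> Ls j \<Longrightarrow> P a"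
    and sup: "\<And>a b s. a \<in> L \<Longrightarrow> b \<in> L \<Longrightarrow> P a \<Longrightarrow> P b \<Longrightarrow> is_sup le L {a, b} s \<Longrightarrow> P s"
    and inf: "\<And>a b m. a \<in> L \<Longrightarrow> b \<in> L \<Longrightarrow> P a \<Longrightarrow> P b \<Longrightarrow> is_inf le L {a, b} m \<Longrightarrow> P m"
  shows "P x"
proof -
  define T where "T = {x \<in> L. P x}"
  note L = is_coproduct0D(1)[OF cp] and Ls = is_coproduct0D(2)[OF cp]
  have T: "sublattice0 le L z T"
    unfolding sublattice0_def
  proof (intro conjI ballI allI impI)
    show "T \<subseteq> L" "z \<in> T" unfolding T_def using lattice0_zero(1)[OF L] zero by auto
    fix a b s assume "a \<in> T" "b \<in> T"
    then have ab: "a \<in> L" "b \<in> L" "P a" "P b" unfolding T_def by auto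
    show "is_sup le L {a, b} s \<Longrightarrow> s \<in> T"
      unfolding T_def using sup[OF ab] unfolding is_sup_def by blast
    show "is_inf le L {a, b} s \<Longrightarrow> s \<in> T"
      unfolding T_def using inf[OF ab] unfolding is_inf_def by blast
  qed
  have Ls_T: "Ls j \<subseteq> T" if j: "j \<in> I" for j
    using sublattice0D(1)[OF Ls[OF j]] generator[OF j] unfolding T_def by blast
  have inj: "inj_on (\<lambda>x. [Inl x]) A" for A :: "'a set" by (simp add: inj_on_def)
  have "lattice_hom0 le (Ls j) z le T z id" if j: "j \<in> I" for j
  proof -
    have "id ` Ls j \<subseteq> T" using Ls_T[OF j] by simp
    from lattice_hom0_into_sublattice0_iff[OF L T this] show ?thesis
      using lattice_hom0_inclusion[OF L Ls[OF j]] by simp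
  qed
  then obtain f where f: "lattice_hom0 le L z le T z f" "\<forall>j\<in>I. \<forall>x\<in>Ls j. f x = id x"
    using coproduct0_universal[OF cp sublattice0_lattice0[OF L T] inj, of "\<lambda>j. id"] by blast
  have fT: "f ` L \<subseteq> T" using f(1) unfolding lattice_hom0_def lattice_hom_def by blast
  have "\<forall>j\<in>I. lattice_hom0 le (Ls j) z le L z id"
    using lattice_hom0_inclusion[OF L Ls] by simp
  then obtain F where F_unique: "\<And>g. lattice_hom0 le L z le L z g \<and> (\<forall>j\<in>I. \<forall>x\<in>Ls j. g x = id x)
      \<Longrightarrow> \<forall>x\<in>L. g x = F x"
    using coproduct0_universal[OF cp L inj, of "\<lambda>j. id"] by blast
  have "lattice_hom0 le L z le L z f"
    using f(1) lattice_hom0_into_sublattice0_iff[OF L T fT] by simp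
  then have "\<forall>x\<in>L. f x = F x" using F_unique[of f] f(2) by blast
  moreover have "\<forall>x\<in>L. id x = F x"
    using F_unique[of id] lattice_hom0_inclusion[OF L sublattice0_refl[OF L]] by blast
  ultimately have "f x = x" using x by (metis id_apply)
  moreover have "f x \<in> T" using fT x by blast
  ultimately show ?thesis unfolding T_def by simp
qed

section \<open>Adjoining a top element\<close>

lemma le_top_simps [simp]:
  "le_top le u None" "\<not> le_top le None (Some y)" "le_top le (Some x) (Some y) \<longleftrightarrow> le x y"
  by (auto simp: le_top_def)

lemma with_top_simps [simp]:
  "None \<in> with_top A" "Some a \<in> with_top A \<longleftrightarrow> a \<in> A"
  by (auto simp: with_top_def)

lemma with_top_mono: "A \<subseteq> B \<Longrightarrow> with_top A \<subseteq> with_top B"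
  by (auto simp: with_top_def)

lemma le_top_refl: "partial_order_on_set le A \<Longrightarrow> u \<in> with_top A \<Longrightarrow> le_top le u u"
  by (cases u) (auto intro: po_refl)

lemma le_top_trans:
  assumes po: "partial_order_on_set le A" and u: "u \<in> with_top A" and v: "v \<in> with_top A"
    and w: "w \<in> with_top A" and uv: "le_top le u v" and vw: "le_top le v w"
  shows "le_top le u w"
proof (cases w)
  case (Some c)
  then obtain b where b: "v = Some b" using vw by (cases v) auto
  then obtain a where a: "u = Some a" using uv by (cases u) auto
  show ?thesis using po_trans[OF po, of a b c] u v w uv vw a b Some by simp
qed simp

lemma le_top_antisym:
  assumes po: "partial_order_on_set le A" and u: "u \<in> with_top A" and v: "v \<in> with_top A"
    and uv: "le_top le u v" and vu: "le_top le v u"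
  shows "u = v"
proof (cases u)
  case None
  then show ?thesis using uv by (cases v) auto
next
  case (Some a)
  then obtain b where b: "v = Some b" using vu by (cases v) auto
  show ?thesis using po_antisym[OF po, of a b] u v uv vu Some b by simp
qed

lemma po_with_top: "partial_order_on_set le A \<Longrightarrow> partial_order_on_set (le_top le) (with_top A)"
  unfolding partial_order_on_set_def[of "le_top le"]
  using le_top_refl[of le A] le_top_antisym[of le A] le_top_trans[of le A] by blast

lemma is_sup_Some_with_top:
  assumes s: "is_sup le A {a, b} s"
  shows "is_sup (le_top le) (with_top A) {Some a, Some b} (Some s)"
  unfolding is_sup_def
proof (intro conjI ballI impI)
  show "Some s \<in> with_top A" using s unfolding is_sup_def by simp
  show "le_top le u (Some s)" if "u \<in> {Some a, Some b}" for u
    using that s unfolding is_sup_def by auto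
  show "le_top le (Some s) w" if "w \<in> with_top A" "\<forall>u\<in>{Some a, Some b}. le_top le u w" for w
    using that s unfolding is_sup_def by (cases w) auto
qed

lemma is_inf_Some_with_top:
  assumes m: "is_inf le A {a, b} m"
  shows "is_inf (le_top le) (with_top A) {Some a, Some b} (Some m)"
  unfolding is_inf_def
proof (intro conjI ballI impI)
  show "Some m \<in> with_top A" using m unfolding is_inf_def by simp
  show "le_top le (Some m) u" if "u \<in> {Some a, Some b}" for u
    using that m unfolding is_inf_def by auto
  show "le_top le w (Some m)" if "w \<in> with_top A" "\<forall>u\<in>{Some a, Some b}. le_top le w u" for w
    using that m unfolding is_inf_def by (cases w) auto
qed

lemma is_sup_None_with_top: "None \<in> X \<Longrightarrow> is_sup (le_top le) (with_top A) X None"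
  unfolding is_sup_def by (metis le_top_def option.case(1) option.exhaust with_top_simps(1))

lemma is_inf_None_with_top:
  "partial_order_on_set le A \<Longrightarrow> u \<in> with_top A \<Longrightarrow> is_inf (le_top le) (with_top A) {None, u} u"
  unfolding is_inf_def using le_top_refl by fastforce

lemma lattice0_with_top:
  assumes A: "is_lattice0 le A z"
  shows "is_lattice0 (le_top le) (with_top A) (Some z)"
proof (rule lattice0I)
  have po: "partial_order_on_set le A" using lattice0_po[OF A] .
  show "partial_order_on_set (le_top le) (with_top A)" using po_with_top[OF po] .
  show "Some z \<in> with_top A" using lattice0_zero(1)[OF A] by simp
  show "le_top le (Some z) u" if "u \<in> with_top A" for u
    using that lattice0_zero(2)[OF A] by (cases u) auto
  show "\<exists>s. is_sup (le_top le) (with_top A) {u, v} s" if uv: "u \<in> with_top A" "v \<in> with_top A" for u v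
  proof (cases "u = None \<or> v = None")
    case True
    then show ?thesis using is_sup_None_with_top[of "{u, v}"] by blast
  next
    case False
    then obtain a b where ab: "u = Some a" "v = Some b" "a \<in> A" "b \<in> A" using uv by auto
    then obtain s where "is_sup le A {a, b} s" using lattice0_sup_ex[OF A] by blast
    then show ?thesis unfolding ab(1,2) by (blast intro: is_sup_Some_with_top)
  qed
  show "\<exists>m. is_inf (le_top le) (with_top A) {u, v} m" if uv: "u \<in> with_top A" "v \<in> with_top A" for u v
  proof (cases "u = None \<or> v = None")
    case True
    then show ?thesis
      using is_inf_None_with_top[OF po uv(1)] is_inf_None_with_top[OF po uv(2)] insert_commute
      by metis
  next
    case False
    then obtain a b where ab: "u = Some a" "v = Some b" "a \<in> A" "b \<in> A" using uv by auto
    then obtain m where "is_inf le A {a, b} m" using lattice0_inf_ex[OF A] by blast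
    then show ?thesis unfolding ab(1,2) by (blast intro: is_inf_Some_with_top)
  qed
qed

lemma lattice_hom0_Some_with_top:
  assumes L: "is_lattice0 le L z" and B: "sublattice0 le L z B"
  shows "lattice_hom0 le B z (le_top le) (with_top L) (Some z) Some"
  unfolding lattice_hom0_def lattice_hom_def
  using sublattice0D(1)[OF B] sublattice0_sup_iff[OF L B] sublattice0_inf_iff[OF L B]
    is_sup_Some_with_top is_inf_Some_with_top by auto

lemma le_top_Some_sup:
  assumes s: "is_sup le L {x, y} s" and u: "u \<in> with_top L"
    and "le_top le (Some x) u" "le_top le (Some y) u"
  shows "le_top le (Some s) u"
  using assms unfolding is_sup_def by (cases u) auto

lemma with_top_inf_closed:
  assumes L: "is_lattice0 le L z" and A: "sublattice0 le L z A"
    and u: "u \<in> with_top A" and v: "v \<in> with_top A"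
  obtains w where "w \<in> with_top A" "is_inf (le_top le) (with_top L) {u, v} w"
proof (cases "u = None \<or> v = None")
  case True
  have "u \<in> with_top L" "v \<in> with_top L" using u v with_top_mono[OF sublattice0D(1)[OF A]] by auto
  then show ?thesis
    using True that u v is_inf_None_with_top[OF lattice0_po[OF L]] by (metis insert_commute)
next
  case False
  then obtain a b where ab: "u = Some a" "v = Some b" "a \<in> A" "b \<in> A" using u v by auto
  then obtain m where m: "is_inf le L {a, b} m"
    using lattice0_inf_ex[OF L] sublattice0D(1)[OF A] by blast
  then have "m \<in> A" using sublattice0D(4)[OF A ab(3,4)] by blast
  then show ?thesis using that[of "Some m"] is_inf_Some_with_top[OF m] ab(1,2) by simp
qed

lemma is_sup_zero_or_top:
  assumes B: "is_lattice0 le B z" and A: "partial_order_on_set le A" "z \<in> A"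
    and s: "is_sup le B {a, b} s" and a: "a \<in> B" and b: "b \<in> B"
  shows "is_sup (le_top le) (with_top A)
    {if a = z then Some z else None, if b = z then Some z else None} (if s = z then Some z else None)"
proof (cases "s = z")
  case True
  then have "a = z" "b = z" using lattice0_sup_eq_zero[OF B s a b] by simp_all
  with True show ?thesis
    using is_sup_Some_with_top[OF is_sup_pair_of_le[OF A(1) A(2) A(2) po_refl[OF A]]] by simp
next
  case False
  then have "a \<noteq> z \<or> b \<noteq> z" using lattice0_sup_eq_zero[OF B s a b] by simp
  with False show ?thesis using is_sup_None_with_top by auto
qed

lemma is_inf_zero_or_top:
  assumes B: "is_lattice0 le B z" and A: "partial_order_on_set le A"
    and m: "is_inf le B {a, b} m" and mz: "m \<noteq> z"
  shows "is_inf (le_top le) (with_top A)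
    {if a = z then Some z else None, if b = z then Some z else None} (if m = z then Some z else None)"
proof -
  have "le m a" "le m b" "m \<in> B" using m unfolding is_inf_def by auto
  then have "a \<noteq> z" "b \<noteq> z" using mz lattice0_le_zero[OF B] by auto
  then show ?thesis using mz is_inf_None_with_top[OF A, of None] by simp
qed

section \<open>The smash product\<close>

definition smash_le :: "('b \<Rightarrow> 'b \<Rightarrow> bool) \<Rightarrow> ('c \<Rightarrow> 'c \<Rightarrow> bool) \<Rightarrow> 'b \<times> 'c \<Rightarrow> 'b \<times> 'c \<Rightarrow> bool" where
  "smash_le le1 le2 p q \<longleftrightarrow> le1 (fst p) (fst q) \<and> le2 (snd p) (snd q)"

definition smash :: "'b set \<Rightarrow> 'b \<Rightarrow> 'c set \<Rightarrow> 'c \<Rightarrow> ('b \<times> 'c) set" where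
  "smash A1 z1 A2 z2 = insert (z1, z2) ((A1 - {z1}) \<times> (A2 - {z2}))"

lemma smash_le_simp [simp]: "smash_le le1 le2 (a, b) (c, d) \<longleftrightarrow> le1 a c \<and> le2 b d"
  by (simp add: smash_le_def)

lemma mem_smash_iff:
  "z1 \<in> A1 \<Longrightarrow> z2 \<in> A2 \<Longrightarrow> (p, q) \<in> smash A1 z1 A2 z2 \<longleftrightarrow> p \<in> A1 \<and> q \<in> A2 \<and> (p = z1 \<longleftrightarrow> q = z2)"
  unfolding smash_def by auto

lemma is_sup_smash:
  assumes A1: "is_lattice0 le1 A1 z1" and A2: "is_lattice0 le2 A2 z2"
    and p: "(p1, q1) \<in> smash A1 z1 A2 z2" and q: "(p2, q2) \<in> smash A1 z1 A2 z2"
    and s1: "is_sup le1 A1 {p1, p2} s1" and s2: "is_sup le2 A2 {q1, q2} s2"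
  shows "is_sup (smash_le le1 le2) (smash A1 z1 A2 z2) {(p1, q1), (p2, q2)} (s1, s2)"
proof -
  note mem_iff = mem_smash_iff[OF lattice0_zero(1)[OF A1] lattice0_zero(1)[OF A2]]
  have s1A: "s1 \<in> A1" and s2A: "s2 \<in> A2" using s1 s2 unfolding is_sup_def by blast+
  have "s1 = z1 \<longleftrightarrow> s2 = z2"
    using lattice0_sup_eq_zero[OF A1 s1] lattice0_sup_eq_zero[OF A2 s2] p q mem_iff by auto
  then have "(s1, s2) \<in> smash A1 z1 A2 z2" using mem_iff s1A s2A by blast
  then show ?thesis using s1 s2 mem_iff unfolding is_sup_def by auto
qed

lemma is_inf_smash:
  assumes A1: "is_lattice0 le1 A1 z1" and A2: "is_lattice0 le2 A2 z2"
    and p: "(p1, q1) \<in> smash A1 z1 A2 z2" and q: "(p2, q2) \<in> smash A1 z1 A2 z2"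
    and m1: "is_inf le1 A1 {p1, p2} m1" and m2: "is_inf le2 A2 {q1, q2} m2"
  shows "is_inf (smash_le le1 le2) (smash A1 z1 A2 z2) {(p1, q1), (p2, q2)}
    (if m1 = z1 \<or> m2 = z2 then (z1, z2) else (m1, m2))"
proof -
  have z1: "z1 \<in> A1" and z2: "z2 \<in> A2" using lattice0_zero(1)[OF A1] lattice0_zero(1)[OF A2] .
  note mem_iff = mem_smash_iff[OF z1 z2]
  have m1A: "m1 \<in> A1" and m2A: "m2 \<in> A2" using m1 m2 unfolding is_inf_def by blast+
  have lower: "smash_le le1 le2 b (m1, m2)"
    if "b \<in> smash A1 z1 A2 z2" "smash_le le1 le2 b (p1, q1)" "smash_le le1 le2 b (p2, q2)" for b
    using that m1 m2 mem_iff unfolding is_inf_def by (cases b) auto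
  show ?thesis
  proof (cases "m1 = z1 \<or> m2 = z2")
    case False
    then have "(m1, m2) \<in> smash A1 z1 A2 z2" using mem_iff m1A m2A by blast
    then show ?thesis using False lower m1 m2 unfolding is_inf_def by auto
  next
    case True
    have zero_eq: "b = (z1, z2)"
      if "b \<in> smash A1 z1 A2 z2" "smash_le le1 le2 b (m1, m2)" for b
      using that True lattice0_le_zero[OF A1] lattice0_le_zero[OF A2] mem_iff by (cases b) auto
    have zero_le: "smash_le le1 le2 (z1, z2) b" if "b \<in> smash A1 z1 A2 z2" for b
      using that lattice0_zero(2)[OF A1] lattice0_zero(2)[OF A2] mem_iff by (cases b) auto
    show ?thesis
      unfolding is_inf_def if_P[OF True]
    proof (intro conjI ballI impI)
      show "(z1, z2) \<in> smash A1 z1 A2 z2" unfolding smash_def by simp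
      show "smash_le le1 le2 (z1, z2) u" if "u \<in> {(p1, q1), (p2, q2)}" for u
        using that zero_le p q by blast
      show "smash_le le1 le2 b (z1, z2)"
        if "b \<in> smash A1 z1 A2 z2" "\<forall>u\<in>{(p1, q1), (p2, q2)}. smash_le le1 le2 b u" for b
        using zero_eq[OF that(1) lower] zero_le[OF that(1)] that by simp
    qed
  qed
qed

lemma lattice0_smash:
  assumes A1: "is_lattice0 le1 A1 z1" and A2: "is_lattice0 le2 A2 z2"
  shows "is_lattice0 (smash_le le1 le2) (smash A1 z1 A2 z2) (z1, z2)"
proof (rule lattice0I)
  have po1: "partial_order_on_set le1 A1" and po2: "partial_order_on_set le2 A2"
    using lattice0_po[OF A1] lattice0_po[OF A2] .
  note mem_iff = mem_smash_iff[OF lattice0_zero(1)[OF A1] lattice0_zero(1)[OF A2]]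
  have "smash A1 z1 A2 z2 \<subseteq> A1 \<times> A2" using mem_iff by auto
  moreover have "partial_order_on_set (smash_le le1 le2) (A1 \<times> A2)"
    unfolding partial_order_on_set_def
  proof (intro conjI ballI impI)
    fix u assume "u \<in> A1 \<times> A2"
    then show "smash_le le1 le2 u u" by (auto simp: smash_le_def intro: po_refl[OF po1] po_refl[OF po2])
  next
    fix u v assume "u \<in> A1 \<times> A2" "v \<in> A1 \<times> A2" "smash_le le1 le2 u v \<and> smash_le le1 le2 v u"
    then show "u = v"
      using po_antisym[OF po1, of "fst u" "fst v"] po_antisym[OF po2, of "snd u" "snd v"]
      by (simp add: smash_le_def prod_eq_iff mem_Times_iff)
  next
    fix u v w assume "u \<in> A1 \<times> A2" "v \<in> A1 \<times> A2" "w \<in> A1 \<times> A2"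
      "smash_le le1 le2 u v \<and> smash_le le1 le2 v w"
    then show "smash_le le1 le2 u w"
      using po_trans[OF po1, of "fst u" "fst v" "fst w"] po_trans[OF po2, of "snd u" "snd v" "snd w"]
      by (simp add: smash_le_def mem_Times_iff)
  qed
  ultimately show "partial_order_on_set (smash_le le1 le2) (smash A1 z1 A2 z2)"
    by (rule po_subset[rotated])
  show "(z1, z2) \<in> smash A1 z1 A2 z2" unfolding smash_def by simp
  show "smash_le le1 le2 (z1, z2) u" if "u \<in> smash A1 z1 A2 z2" for u
    using that lattice0_zero(2)[OF A1] lattice0_zero(2)[OF A2] mem_iff by (cases u) auto
  show "\<exists>s. is_sup (smash_le le1 le2) (smash A1 z1 A2 z2) {u, v} s"
    if u: "u \<in> smash A1 z1 A2 z2" and v: "v \<in> smash A1 z1 A2 z2" for u v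
  proof -
    obtain p1 q1 p2 q2 where uv: "u = (p1, q1)" "v = (p2, q2)" by (cases u, cases v)
    obtain s1 where s1: "is_sup le1 A1 {p1, p2} s1" using lattice0_sup_ex[OF A1] u v uv mem_iff by blast
    obtain s2 where s2: "is_sup le2 A2 {q1, q2} s2" using lattice0_sup_ex[OF A2] u v uv mem_iff by blast
    show ?thesis using is_sup_smash[OF A1 A2 u[unfolded uv(1)] v[unfolded uv(2)] s1 s2] uv by blast
  qed
  show "\<exists>m. is_inf (smash_le le1 le2) (smash A1 z1 A2 z2) {u, v} m"
    if u: "u \<in> smash A1 z1 A2 z2" and v: "v \<in> smash A1 z1 A2 z2" for u v
  proof -
    obtain p1 q1 p2 q2 where uv: "u = (p1, q1)" "v = (p2, q2)" by (cases u, cases v)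
    obtain m1 where m1: "is_inf le1 A1 {p1, p2} m1" using lattice0_inf_ex[OF A1] u v uv mem_iff by blast
    obtain m2 where m2: "is_inf le2 A2 {q1, q2} m2" using lattice0_inf_ex[OF A2] u v uv mem_iff by blast
    show ?thesis using is_inf_smash[OF A1 A2 u[unfolded uv(1)] v[unfolded uv(2)] m1 m2] uv by blast
  qed
qed

lemma lattice_hom0_into_smash:
  assumes B: "is_lattice0 le B z" and A1: "is_lattice0 le1 A1 z1" and A2: "is_lattice0 le2 A2 z2"
    and g1: "g1 ` B \<subseteq> A1" "\<And>a. a \<in> B \<Longrightarrow> g1 a = z1 \<longleftrightarrow> a = z"
      "\<And>a b s. a \<in> B \<Longrightarrow> b \<in> B \<Longrightarrow> is_sup le B {a, b} s \<Longrightarrow> is_sup le1 A1 {g1 a, g1 b} (g1 s)"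
      "\<And>a b m. a \<in> B \<Longrightarrow> b \<in> B \<Longrightarrow> is_inf le B {a, b} m \<Longrightarrow> m \<noteq> z
        \<Longrightarrow> is_inf le1 A1 {g1 a, g1 b} (g1 m)"
    and g2: "lattice_hom0 le B z le2 A2 z2 g2" "\<And>a. a \<in> B \<Longrightarrow> g2 a = z2 \<longleftrightarrow> a = z"
  shows "lattice_hom0 le B z (smash_le le1 le2) (smash A1 z1 A2 z2) (z1, z2) (\<lambda>a. (g1 a, g2 a))"
  unfolding lattice_hom0_def lattice_hom_def
proof (intro conjI ballI allI impI)
  note mem_iff = mem_smash_iff[OF lattice0_zero(1)[OF A1] lattice0_zero(1)[OF A2]]
  have zB: "z \<in> B" using lattice0_zero(1)[OF B] .
  have mem: "(g1 a, g2 a) \<in> smash A1 z1 A2 z2" if "a \<in> B" for a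
    using that g1(1,2) g2(2) lattice_hom0_mem[OF g2(1)] mem_iff by auto
  then show "(\<lambda>a. (g1 a, g2 a)) ` B \<subseteq> smash A1 z1 A2 z2" by blast
  show "(g1 z, g2 z) = (z1, z2)" using g1(2)[OF zB] g2(2)[OF zB] by simp
  fix a b s assume ab: "a \<in> B" "b \<in> B"
  show "is_sup (smash_le le1 le2) (smash A1 z1 A2 z2) {(g1 a, g2 a), (g1 b, g2 b)} (g1 s, g2 s)"
    if s: "is_sup le B {a, b} s"
    using is_sup_smash[OF A1 A2 mem[OF ab(1)] mem[OF ab(2)] g1(3)[OF ab s]
        lattice_hom0_sup[OF g2(1) ab s]] .
  show "is_inf (smash_le le1 le2) (smash A1 z1 A2 z2) {(g1 a, g2 a), (g1 b, g2 b)} (g1 s, g2 s)"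
    if m: "is_inf le B {a, b} s"
  proof -
    have sB: "s \<in> B" using m unfolding is_inf_def by blast
    note m2 = lattice_hom0_inf[OF g2(1) ab m]
    show ?thesis
    proof (cases "s = z")
      case True
      obtain m1 where "is_inf le1 A1 {g1 a, g1 b} m1"
        using lattice0_inf_ex[OF A1] g1(1) ab by blast
      from is_inf_smash[OF A1 A2 mem[OF ab(1)] mem[OF ab(2)] this m2] show ?thesis
        using True g1(2)[OF zB] g2(2)[OF zB] by simp
    next
      case False
      from is_inf_smash[OF A1 A2 mem[OF ab(1)] mem[OF ab(2)] g1(4)[OF ab m False] m2] show ?thesis
        using False g1(2)[OF sB] g2(2)[OF sB] by simp
    qed
  qed
qed

locale smash_hom =
  fixes le :: "'a \<Rightarrow> 'a \<Rightarrow> bool" and L :: "'a set" and z :: 'a and A :: "'a set"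
    and h :: "'a \<Rightarrow> 'a option \<times> 'a option"
  assumes lattice: "is_lattice0 le L z" and sub: "sublattice0 le L z A"
    and hom: "lattice_hom0 le L z (smash_le (le_top le) (le_top le))
      (smash (with_top A) (Some z) (with_top L) (Some z)) (Some z, Some z) h"
begin

definition below_image :: "'a \<Rightarrow> bool" where
  "below_image x \<longleftrightarrow> le_top le (Some x) (fst (h x)) \<and> le_top le (Some x) (snd (h x))"

lemma po: "partial_order_on_set le L"
  using lattice0_po[OF lattice] .

lemma with_top_A: "with_top A \<subseteq> with_top L"
  using with_top_mono[OF sublattice0D(1)[OF sub]] .

lemma image_mem:
  assumes "x \<in> L"
  shows "fst (h x) \<in> with_top A" "snd (h x) \<in> with_top L"
proof -
  have z: "Some z \<in> with_top A" "Some z \<in> with_top L"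
    using sublattice0D(2)[OF sub] lattice0_zero(1)[OF lattice] by simp_all
  have "(fst (h x), snd (h x)) \<in> smash (with_top A) (Some z) (with_top L) (Some z)"
    using lattice_hom0_mem[OF hom assms] by simp
  then show "fst (h x) \<in> with_top A" "snd (h x) \<in> with_top L"
    unfolding mem_smash_iff[OF z] by simp_all
qed

lemma image_mem_with_top_L: "x \<in> L \<Longrightarrow> fst (h x) \<in> with_top L" "x \<in> L \<Longrightarrow> snd (h x) \<in> with_top L"
  using image_mem with_top_A by blast+

lemma image_mono:
  "x \<in> L \<Longrightarrow> y \<in> L \<Longrightarrow> le x y \<Longrightarrow> le_top le (fst (h x)) (fst (h y)) \<and> le_top le (snd (h x)) (snd (h y))"
  using lattice_hom0_mono[OF hom po] by (simp add: smash_le_def)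

lemma below_image_sup:
  assumes a: "a \<in> L" "below_image a" and b: "b \<in> L" "below_image b" and s: "is_sup le L {a, b} s"
  shows "below_image s"
proof -
  have sL: "s \<in> L" and as: "le a s" and bs: "le b s" using s unfolding is_sup_def by auto
  have "le_top le (Some c) (fst (h s)) \<and> le_top le (Some c) (snd (h s))"
    if "c \<in> L" "le c s" "below_image c" for c
    using le_top_trans[OF po _ image_mem_with_top_L(1)[OF that(1)] image_mem_with_top_L(1)[OF sL]]
      le_top_trans[OF po _ image_mem_with_top_L(2)[OF that(1)] image_mem_with_top_L(2)[OF sL]]
      image_mono[OF that(1) sL that(2)] that unfolding below_image_def by auto
  then show ?thesis
    using a b as bs le_top_Some_sup[OF s] image_mem_with_top_L[OF sL]
    unfolding below_image_def by blast
qed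

lemma below_image_inf:
  assumes a: "a \<in> L" "below_image a" and b: "b \<in> L" "below_image b" and m: "is_inf le L {a, b} m"
  shows "below_image m"
proof -
  have mL: "m \<in> L" and ma: "le m a" and mb: "le m b" using m unfolding is_inf_def by auto
  have below: "le_top le (Some m) (fst (h c)) \<and> le_top le (Some m) (snd (h c))"
    if "c \<in> L" "le m c" "below_image c" for c
    using le_top_trans[OF po _ _ image_mem_with_top_L(1)[OF that(1)], where u = "Some m" and v = "Some c"]
      le_top_trans[OF po _ _ image_mem_with_top_L(2)[OF that(1)], where u = "Some m" and v = "Some c"]
      mL that unfolding below_image_def by auto
  obtain w1 where w1: "w1 \<in> with_top A" "is_inf (le_top le) (with_top L) {fst (h a), fst (h b)} w1"
    using with_top_inf_closed[OF lattice sub image_mem(1)[OF a(1)] image_mem(1)[OF b(1)]] .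
  obtain w2 where w2: "w2 \<in> with_top L" "is_inf (le_top le) (with_top L) {snd (h a), snd (h b)} w2"
    using with_top_inf_closed[OF lattice sublattice0_refl[OF lattice] image_mem(2)[OF a(1)]
        image_mem(2)[OF b(1)]] .
  have m_w: "le_top le (Some m) w1" "le_top le (Some m) w2"
    using w1(2) w2(2) below[OF a(1) ma a(2)] below[OF b(1) mb b(2)] mL unfolding is_inf_def by auto
  show ?thesis
  proof (cases "w1 = Some z \<or> w2 = Some z")
    case True
    then have "m = z" using m_w lattice0_le_zero[OF lattice mL] by auto
    then show ?thesis
      using lattice_hom0_zero[OF hom] po_refl[OF po mL] unfolding below_image_def by simp
  next
    case False
    then have "(w1, w2) \<in> smash (with_top A) (Some z) (with_top L) (Some z)"
      using w1(1) w2(1) unfolding smash_def by auto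
    moreover have "smash_le (le_top le) (le_top le) (w1, w2) (h a)"
      "smash_le (le_top le) (le_top le) (w1, w2) (h b)"
      using w1(2) w2(2) unfolding is_inf_def smash_le_def by auto
    ultimately have "smash_le (le_top le) (le_top le) (w1, w2) (h m)"
      using lattice_hom0_inf[OF hom a(1) b(1) m] unfolding is_inf_def by blast
    then show ?thesis
      using le_top_trans[OF po _ _ image_mem_with_top_L(1)[OF mL] m_w(1)]
        le_top_trans[OF po _ _ image_mem_with_top_L(2)[OF mL] m_w(2)]
        w1(1) with_top_A w2(1) mL unfolding below_image_def by (auto simp: smash_le_def)
  qed
qed

end

section \<open>Projections onto a coproduct component\<close>

lemma is_greatest_belowD:
  assumes "is_greatest_below le A x y"
  shows "y \<in> A" "le y x" "w \<in> A \<Longrightarrow> le w x \<Longrightarrow> le w y"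
  using assms unfolding is_greatest_below_def by blast+

lemma is_least_aboveD:
  assumes "is_least_above le A x u"
  shows "u \<in> with_top A" "le_top le (Some x) u"
    "w \<in> with_top A \<Longrightarrow> le_top le (Some x) w \<Longrightarrow> le_top le u w"
  using assms unfolding is_least_above_def by blast+

lemma lower_proj_eq:
  assumes "partial_order_on_set le A" and "is_greatest_below le A x y"
  shows "lower_proj le A x = y"
  unfolding lower_proj_def
  by (rule the_equality) (use assms in \<open>auto simp: is_greatest_below_def intro: po_antisym\<close>)

lemma upper_proj_eq:
  assumes "partial_order_on_set le A" and "is_least_above le A x y"
  shows "upper_proj le A x = y"
  unfolding upper_proj_def
  by (rule the_equality) (use assms in \<open>auto simp: is_least_above_def intro: le_top_antisym\<close>)

lemma coproduct0_retraction:
  assumes cp: "is_coproduct0 le L z I Ls" and i: "i \<in> I"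
  obtains f where "lattice_hom0 le L z le (Ls i) z f" "\<And>x. x \<in> Ls i \<Longrightarrow> f x = x"
    "\<And>j x. j \<in> I \<Longrightarrow> j \<noteq> i \<Longrightarrow> x \<in> Ls j \<Longrightarrow> f x = z"
proof -
  note L = is_coproduct0D(1)[OF cp] and Ls = is_coproduct0D(2)[OF cp]
  have Li: "is_lattice0 le (Ls i) z" using sublattice0_lattice0[OF L Ls[OF i]] .
  define fs where "fs j = (if j = i then id else (\<lambda>_. z))" for j
  have "lattice_hom0 le (Ls j) z le (Ls i) z (fs j)" if j: "j \<in> I" for j
  proof (cases "j = i")
    case True
    then show ?thesis
      using lattice_hom0_inclusion[OF Li sublattice0_refl[OF Li]] unfolding fs_def by simp
  next
    case False
    then show ?thesis using const_lattice_hom0[OF Li] unfolding fs_def by simp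
  qed
  moreover have "inj_on (\<lambda>x. [Inl x]) (Ls i)" by (simp add: inj_on_def)
  ultimately obtain f where "lattice_hom0 le L z le (Ls i) z f" "\<forall>j\<in>I. \<forall>x\<in>Ls j. f x = fs j x"
    using coproduct0_universal[OF cp Li, of "\<lambda>x. [Inl x]" fs] by blast
  then show ?thesis using that i unfolding fs_def by simp
qed

lemma coproduct0_greatest_below:
  assumes cp: "is_coproduct0 le L z I Ls" and i: "i \<in> I" and x: "x \<in> L"
  shows "\<exists>y. is_greatest_below le (Ls i) x y"
proof -
  note L = is_coproduct0D(1)[OF cp] and Ls = is_coproduct0D(2)[OF cp]
  have po: "partial_order_on_set le L" using lattice0_po[OF L] .
  note Li = Ls[OF i]
  obtain f where f: "lattice_hom0 le L z le (Ls i) z f" and f_id: "\<And>x. x \<in> Ls i \<Longrightarrow> f x = x"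
    and f_zero: "\<And>j x. j \<in> I \<Longrightarrow> j \<noteq> i \<Longrightarrow> x \<in> Ls j \<Longrightarrow> f x = z"
    using coproduct0_retraction[OF cp i] by blast
  have fLi: "f a \<in> Ls i" if "a \<in> L" for a using lattice_hom0_mem[OF f that] .
  have fL: "f a \<in> L" if "a \<in> L" for a using fLi[OF that] sublattice0D(1)[OF Li] by blast
  have "f ` L \<subseteq> Ls i" using fLi by blast
  with f have f_hom: "lattice_hom0 le L z le L z f"
    using lattice_hom0_into_sublattice0_iff[OF L Li \<open>f ` L \<subseteq> Ls i\<close>] by simp
  have below: "le (f x) x"
    using cp x
  proof (induction rule: coproduct0_induct)
    case zero
    show ?case using lattice_hom0_zero[OF f] po_refl[OF po lattice0_zero(1)[OF L]] by simp
  next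
    case (generator j a)
    have a: "a \<in> L" using generator sublattice0D(1)[OF Ls[OF generator(1)]] by blast
    show ?case
    proof (cases "j = i")
      case True
      then show ?thesis using f_id generator(2) po_refl[OF po a] by simp
    next
      case False
      then show ?thesis using f_zero[OF generator(1) False generator(2)] lattice0_zero(2)[OF L a] by simp
    qed
  next
    case (sup a b s)
    note ab = sup.hyps(1,2)
    have s: "s \<in> L" "le a s" "le b s" using sup.hyps(3) unfolding is_sup_def by auto
    have "le (f a) s" "le (f b) s"
      using po_trans[OF po fL[OF ab(1)] ab(1) s(1)] po_trans[OF po fL[OF ab(2)] ab(2) s(1)]
        sup.IH s(2,3) by auto
    then show ?case
      using lattice_hom0_sup[OF f_hom ab sup.hyps(3)] s(1) unfolding is_sup_def by blast
  next
    case (inf a b m)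
    note ab = inf.hyps(1,2)
    have m: "m \<in> L" using inf.hyps(3) unfolding is_inf_def by blast
    have fm: "le (f m) (f a)" "le (f m) (f b)"
      using lattice_hom0_inf[OF f_hom ab inf.hyps(3)] unfolding is_inf_def by auto
    have "le (f m) a" "le (f m) b"
      using po_trans[OF po fL[OF m] fL[OF ab(1)] ab(1)] po_trans[OF po fL[OF m] fL[OF ab(2)] ab(2)]
        fm inf.IH by auto
    then show ?case using inf.hyps(3) fL[OF m] unfolding is_inf_def by blast
  qed
  have "le w (f x)" if w: "w \<in> Ls i" "le w x" for w
  proof -
    have "w \<in> L" using w(1) sublattice0D(1)[OF Li] by blast
    then show ?thesis using lattice_hom0_mono[OF f_hom po _ x w(2)] f_id[OF w(1)] by simp
  qed
  then show ?thesis using fLi[OF x] below unfolding is_greatest_below_def by blast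
qed

lemma coproduct0_smash_hom:
  assumes cp: "is_coproduct0 le L z I Ls" and i: "i \<in> I"
  obtains h where
    "lattice_hom0 le L z (smash_le (le_top le) (le_top le))
      (smash (with_top (Ls i)) (Some z) (with_top L) (Some z)) (Some z, Some z) h"
    "\<And>a. a \<in> Ls i \<Longrightarrow> h a = (Some a, Some a)"
    "\<And>j a. j \<in> I \<Longrightarrow> j \<noteq> i \<Longrightarrow> a \<in> Ls j \<Longrightarrow> a \<noteq> z \<Longrightarrow> h a = (None, Some a)"
proof -
  note L = is_coproduct0D(1)[OF cp] and Ls = is_coproduct0D(2)[OF cp]
  note Li = Ls[OF i]
  have Li0: "is_lattice0 le (Ls i) z" using sublattice0_lattice0[OF L Li] .
  let ?M = "smash (with_top (Ls i)) (Some z) (with_top L) (Some z)"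
  let ?leM = "smash_le (le_top le) (le_top le)"
  have M: "is_lattice0 ?leM ?M (Some z, Some z)"
    using lattice0_smash[OF lattice0_with_top[OF Li0] lattice0_with_top[OF L]] .
  define g where "g j = (if j = i then Some else (\<lambda>a. if a = z then Some z else None))" for j
  have homs: "lattice_hom0 le (Ls j) z ?leM ?M (Some z, Some z) (\<lambda>a. (g j a, Some a))"
    if j: "j \<in> I" for j
  proof (rule lattice_hom0_into_smash[OF sublattice0_lattice0[OF L Ls[OF j]]
        lattice0_with_top[OF Li0] lattice0_with_top[OF L]])
    note Lj = Ls[OF j]
    show "lattice_hom0 le (Ls j) z (le_top le) (with_top L) (Some z) Some"
      using lattice_hom0_Some_with_top[OF L Lj] .
    show "Some a = Some z \<longleftrightarrow> a = z" for a by simp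
    show "g j ` Ls j \<subseteq> with_top (Ls i)" and "\<And>a. a \<in> Ls j \<Longrightarrow> g j a = Some z \<longleftrightarrow> a = z"
      using sublattice0D(2)[OF Li] by (auto simp: g_def)
    show "is_sup (le_top le) (with_top (Ls i)) {g j a, g j b} (g j s)"
      if "a \<in> Ls j" "b \<in> Ls j" "is_sup le (Ls j) {a, b} s" for a b s
    proof (cases "j = i")
      case True
      then show ?thesis using is_sup_Some_with_top[OF that(3)] by (simp add: g_def)
    next
      case False
      then show ?thesis
        using is_sup_zero_or_top[OF sublattice0_lattice0[OF L Lj] lattice0_po[OF Li0]
            sublattice0D(2)[OF Li] that(3,1,2)]
        by (simp add: g_def)
    qed
    show "is_inf (le_top le) (with_top (Ls i)) {g j a, g j b} (g j m)"
      if "a \<in> Ls j" "b \<in> Ls j" "is_inf le (Ls j) {a, b} m" "m \<noteq> z" for a b m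
    proof (cases "j = i")
      case True
      then show ?thesis using is_inf_Some_with_top[OF that(3)] by (simp add: g_def)
    next
      case False
      then show ?thesis
        using is_inf_zero_or_top[OF sublattice0_lattice0[OF L Lj] lattice0_po[OF Li0] that(3,4)]
        by (simp add: g_def)
    qed
  qed
  have inj: "inj_on (\<lambda>(p, q). [case_option (Inr True) Inl p, case_option (Inr True) Inl q]) ?M"
    by (auto simp: inj_on_def split: option.splits)
  obtain h where "lattice_hom0 le L z ?leM ?M (Some z, Some z) h"
      "\<forall>j\<in>I. \<forall>a\<in>Ls j. h a = (g j a, Some a)"
    using coproduct0_universal[OF cp M inj, of "\<lambda>j a. (g j a, Some a)"] homs by blast
  then show ?thesis using that i by (simp add: g_def)
qed

lemma coproduct0_least_above:
  assumes cp: "is_coproduct0 le L z I Ls" and i: "i \<in> I" and x: "x \<in> L"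
  shows "\<exists>y. is_least_above le (Ls i) x y"
proof -
  note L = is_coproduct0D(1)[OF cp] and Ls = is_coproduct0D(2)[OF cp]
  have po: "partial_order_on_set le L" using lattice0_po[OF L] .
  obtain h where h: "lattice_hom0 le L z (smash_le (le_top le) (le_top le))
      (smash (with_top (Ls i)) (Some z) (with_top L) (Some z)) (Some z, Some z) h"
    and h_i: "\<And>a. a \<in> Ls i \<Longrightarrow> h a = (Some a, Some a)"
    and h_j: "\<And>j a. j \<in> I \<Longrightarrow> j \<noteq> i \<Longrightarrow> a \<in> Ls j \<Longrightarrow> a \<noteq> z \<Longrightarrow> h a = (None, Some a)"
    using coproduct0_smash_hom[OF cp i] by blast
  interpret smash_hom le L z "Ls i" h using L Ls[OF i] h by unfold_locales
  have "below_image x"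
    using cp x
  proof (induction rule: coproduct0_induct)
    case zero
    show ?case
      using lattice_hom0_zero[OF h] po_refl[OF po lattice0_zero(1)[OF L]] unfolding below_image_def by simp
  next
    case (generator j a)
    have "a \<in> L" using generator sublattice0D(1)[OF Ls[OF generator(1)]] by blast
    then show ?case
      using h_i h_j[OF generator(1) _ generator(2)] lattice_hom0_zero[OF h] po_refl[OF po] generator(2)
      unfolding below_image_def by (cases "j = i"; cases "a = z") auto
  next
    case (sup a b s)
    show ?case using below_image_sup[OF sup.hyps(1) sup.IH(1) sup.hyps(2) sup.IH(2) sup.hyps(3)] .
  next
    case (inf a b m)
    show ?case using below_image_inf[OF inf.hyps(1) inf.IH(1) inf.hyps(2) inf.IH(2) inf.hyps(3)] .
  qed
  moreover have "le_top le (fst (h x)) w" if "w \<in> with_top (Ls i)" "le_top le (Some x) w" for w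
  proof (cases w)
    case (Some c)
    then have "c \<in> Ls i" "c \<in> L" "le x c" using that sublattice0D(1)[OF Ls[OF i]] by auto
    then show ?thesis using image_mono[OF x] h_i Some by fastforce
  qed simp
  ultimately show ?thesis
    using image_mem(1)[OF x] unfolding is_least_above_def below_image_def by blast
qed

lemma upper_bounded_inclusion:
  assumes "\<forall>y\<in>L. \<exists>g. is_greatest_below le A y g"
  shows "upper_bounded le A le L id"
  using assms unfolding upper_bounded_def is_greatest_below_def by fastforce

lemma lower_bounded_inclusion:
  assumes "\<forall>y\<in>L. \<exists>u. is_least_above le A y u"
  shows "lower_bounded le A le L id"
  unfolding lower_bounded_def
proof
  fix y assume "y \<in> L"
  then obtain u where u: "is_least_above le A y u" using assms by blast
  show "{x \<in> A. le y (id x)} = {} \<or> (\<exists>m\<in>{x \<in> A. le y (id x)}. \<forall>x\<in>{x \<in> A. le y (id x)}. le m x)"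
  proof (cases u)
    case None
    have "\<not> le y x" if "x \<in> A" for x
      using is_least_aboveD(3)[OF u, of "Some x"] that None by auto
    then show ?thesis by auto
  next
    case (Some m)
    have "le m x" if "x \<in> A" "le y x" for x
      using is_least_aboveD(3)[OF u, of "Some x"] that Some by simp
    moreover have "m \<in> A" "le y m" using u Some unfolding is_least_above_def by simp_all
    ultimately show ?thesis by auto
  qed
qed

lemma lower_bounded_nonempty_meet_complete:
  assumes f: "lower_bounded leK K leM M f" "f ` K \<subseteq> M"
    and mono: "\<And>x y. x \<in> K \<Longrightarrow> y \<in> K \<Longrightarrow> leK x y \<Longrightarrow> leM (f x) (f y)"
    and M: "partial_order_on_set leM M"
  shows "nonempty_meet_complete leK K leM M f"
  unfolding nonempty_meet_complete_def
proof (intro ballI allI impI)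
  fix a X assume a: "a \<in> K" and X: "X \<subseteq> K \<and> X \<noteq> {} \<and> is_inf leK K X a"
  show "is_inf leM M (f ` X) (f a)"
    unfolding is_inf_def
  proof (intro conjI ballI impI)
    show "f a \<in> M" using f(2) a by blast
    show "leM (f a) u" if "u \<in> f ` X" for u
    proof -
      obtain x where "x \<in> X" "u = f x" using \<open>u \<in> f ` X\<close> by blast
      then show ?thesis using mono[OF a, of x] X unfolding is_inf_def by blast
    qed
    fix b assume b: "b \<in> M" and lower: "\<forall>u\<in>f ` X. leM b u"
    let ?S = "{x \<in> K. leM b (f x)}"
    have "X \<subseteq> ?S" using X lower by blast
    then have "?S \<noteq> {}" using X by blast
    then obtain m where m: "m \<in> ?S" "\<forall>x\<in>?S. leK m x"
      using f(1) b unfolding lower_bounded_def by blast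
    then have "leK m a" using \<open>X \<subseteq> ?S\<close> X unfolding is_inf_def by blast
    then have "leM (f m) (f a)" using mono m(1) a by blast
    moreover have "f m \<in> M" "f a \<in> M" using f(2) m(1) a by blast+
    ultimately show "leM b (f a)" using po_trans[OF M b] m(1) by blast
  qed
qed

lemma upper_bounded_nonempty_join_complete:
  assumes f: "upper_bounded leK K leM M f" "f ` K \<subseteq> M"
    and mono: "\<And>x y. x \<in> K \<Longrightarrow> y \<in> K \<Longrightarrow> leK x y \<Longrightarrow> leM (f x) (f y)"
    and M: "partial_order_on_set leM M"
  shows "nonempty_join_complete leK K leM M f"
  unfolding nonempty_join_complete_def
proof (intro ballI allI impI)
  fix a X assume a: "a \<in> K" and X: "X \<subseteq> K \<and> X \<noteq> {} \<and> is_sup leK K X a"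
  show "is_sup leM M (f ` X) (f a)"
    unfolding is_sup_def
  proof (intro conjI ballI impI)
    show "f a \<in> M" using f(2) a by blast
    show "leM u (f a)" if "u \<in> f ` X" for u
    proof -
      obtain x where "x \<in> X" "u = f x" using \<open>u \<in> f ` X\<close> by blast
      then show ?thesis using mono[of x a] a X unfolding is_sup_def by blast
    qed
    fix b assume b: "b \<in> M" and upper: "\<forall>u\<in>f ` X. leM u b"
    let ?S = "{x \<in> K. leM (f x) b}"
    have "X \<subseteq> ?S" using X upper by blast
    then have "?S \<noteq> {}" using X by blast
    then obtain m where m: "m \<in> ?S" "\<forall>x\<in>?S. leK x m"
      using f(1) b unfolding upper_bounded_def by blast
    then have "leK a m" using \<open>X \<subseteq> ?S\<close> X unfolding is_sup_def by blast
    then have "leM (f a) (f m)" using mono m(1) a by blast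
    moreover have "f m \<in> M" "f a \<in> M" using f(2) m(1) a by blast+
    ultimately show "leM (f a) b" using po_trans[OF M _ _ b] m(1) by blast
  qed
qed

lemma meet_complete_lower_proj:
  assumes po: "partial_order_on_set le L" and A: "A \<subseteq> L"
    and glb: "\<forall>x\<in>L. \<exists>y. is_greatest_below le A x y"
  shows "meet_complete le L le A (lower_proj le A)"
  unfolding meet_complete_def
proof (intro ballI allI impI)
  let ?p = "lower_proj le A"
  have p: "is_greatest_below le A x (?p x)" if "x \<in> L" for x
    using glb that lower_proj_eq[OF po_subset[OF po A]] by metis
  note pD = is_greatest_belowD[OF p]
  fix a X assume a: "a \<in> L" and X: "X \<subseteq> L \<and> is_inf le L X a"
  show "is_inf le A (?p ` X) (?p a)"
    unfolding is_inf_def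
  proof (intro conjI ballI impI)
    show "?p a \<in> A" using pD(1)[OF a] .
    show "le (?p a) u" if u: "u \<in> ?p ` X" for u
    proof -
      obtain x where x: "x \<in> X" "u = ?p x" using u by blast
      have "x \<in> L" "le a x" using x(1) X unfolding is_inf_def by blast+
      then have "le (?p a) x" using po_trans[OF po _ a] pD(1,2)[OF a] A by blast
      then show ?thesis using pD(3)[OF \<open>x \<in> L\<close> pD(1)[OF a]] x(2) by simp
    qed
    fix b assume b: "b \<in> A" and lower: "\<forall>u\<in>?p ` X. le b u"
    have "le b x" if "x \<in> X" for x
      using po_trans[OF po _ _ _ _ pD(2)] lower pD(1) that b X A by blast
    then have "le b a" using X b A unfolding is_inf_def by blast
    then show "le b (?p a)" by (rule pD(3)[OF a b])
  qed
qed

lemma join_complete_upper_proj: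
  assumes po: "partial_order_on_set le L" and A: "A \<subseteq> L"
    and lub: "\<forall>x\<in>L. \<exists>y. is_least_above le A x y"
  shows "join_complete le L (le_top le) (with_top A) (upper_proj le A)"
  unfolding join_complete_def
proof (intro ballI allI impI)
  let ?q = "upper_proj le A"
  have q: "is_least_above le A x (?q x)" if "x \<in> L" for x
    using lub that upper_proj_eq[OF po_subset[OF po A]] by metis
  note qD = is_least_aboveD[OF q]
  have q_L: "?q x \<in> with_top L" if "x \<in> L" for x
    using qD(1)[OF that] with_top_mono[OF A] by blast
  fix a X assume a: "a \<in> L" and X: "X \<subseteq> L \<and> is_sup le L X a"
  show "is_sup (le_top le) (with_top A) (?q ` X) (?q a)"
    unfolding is_sup_def
  proof (intro conjI ballI impI)
    show "?q a \<in> with_top A" using qD(1)[OF a] .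
    show "le_top le u (?q a)" if u: "u \<in> ?q ` X" for u
    proof -
      obtain x where x: "x \<in> X" "u = ?q x" using u by blast
      have "x \<in> L" "le x a" using x(1) X unfolding is_sup_def by blast+
      then have "le_top le (Some x) (?q a)"
        using le_top_trans[OF po _ _ q_L[OF a] _ qD(2)[OF a], of "Some x"] a by simp
      then show ?thesis using qD(3)[OF \<open>x \<in> L\<close> qD(1)[OF a]] x(2) by simp
    qed
    fix b assume b: "b \<in> with_top A" and upper: "\<forall>u\<in>?q ` X. le_top le u b"
    show "le_top le (?q a) b"
    proof (cases b)
      case (Some c)
      have c: "c \<in> A" "c \<in> L" using b Some A by auto
      have "le x c" if x: "x \<in> X" for x
      proof -
        have xL: "x \<in> L" using x X by blast
        have "le_top le (?q x) b" using upper x by blast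
        then have "le_top le (Some x) b"
          using le_top_trans[OF po _ q_L[OF xL] _ qD(2)[OF xL]] xL b with_top_mono[OF A] by auto
        then show ?thesis using Some by simp
      qed
      then have "le a c" using X c(2) unfolding is_sup_def by blast
      then show ?thesis using qD(3)[OF a, of b] Some c(1) by simp
    qed simp
  qed
qed

theorem corollary4p3:
  fixes le :: "'a \<Rightarrow> 'a \<Rightarrow> bool" and L :: "'a set" and z :: 'a
    and I :: "'i set" and Ls :: "'i \<Rightarrow> 'a set"
  assumes coprod: "is_coproduct0 le L z I Ls"
    and disj: "\<forall>i\<in>I. \<forall>j\<in>I. i \<noteq> j \<longrightarrow> Ls i \<inter> Ls j = {z}"
    and i: "i \<in> I"
  shows "(\<forall>x\<in>L. \<exists>y. is_greatest_below le (Ls i) x y)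
       \<and> (\<forall>x\<in>L. \<exists>y. is_least_above le (Ls i) x y)
       \<and> lower_bounded le (Ls i) le L id
       \<and> upper_bounded le (Ls i) le L id
       \<and> lattice_hom le (Ls i) le L id
       \<and> nonempty_complete le (Ls i) le L id
       \<and> meet_complete le L le (Ls i) (lower_proj le (Ls i))
       \<and> nonempty_join_complete le L (le_top le) (with_top (Ls i)) (upper_proj le (Ls i))"
proof -
  note L = is_coproduct0D(1)[OF coprod] and Li = is_coproduct0D(2)[OF coprod i]
  have po: "partial_order_on_set le L" using lattice0_po[OF L] .
  have Li_L: "Ls i \<subseteq> L" and Li_L': "id ` Ls i \<subseteq> L" using sublattice0D(1)[OF Li] by auto
  have glb: "\<forall>x\<in>L. \<exists>y. is_greatest_below le (Ls i) x y"
    using coproduct0_greatest_below[OF coprod i] by blast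
  have lub: "\<forall>x\<in>L. \<exists>y. is_least_above le (Ls i) x y"
    using coproduct0_least_above[OF coprod i] by blast
  note lower = lower_bounded_inclusion[OF lub] and upper = upper_bounded_inclusion[OF glb]
  have "nonempty_complete le (Ls i) le L id"
    unfolding nonempty_complete_def
    using lower_bounded_nonempty_meet_complete[OF lower Li_L' _ po]
      upper_bounded_nonempty_join_complete[OF upper Li_L' _ po] by simp
  moreover have "lattice_hom le (Ls i) le L id"
    using lattice_hom0_inclusion[OF L Li] unfolding lattice_hom0_def by blast
  moreover have "nonempty_join_complete le L (le_top le) (with_top (Ls i)) (upper_proj le (Ls i))"
    using join_complete_upper_proj[OF po Li_L lub]
    unfolding join_complete_def nonempty_join_complete_def by blast
  ultimately show ?thesis
    using glb lub lower upper meet_complete_lower_proj[OF po Li_L glb] by blast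
qed

end
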